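(* Let $n\ge 1$ be an integer, $a>0$, and let $a_0,\dots,a_{n-1}:((-a,a)\setminus\{0\})\times\mathbb{K}\to\mathbb{K}$ be arbitrary functions, where $\mathbb{K}=\mathbb{R}$ or $\mathbb{C}$. Let $f\in C^\infty(-a,a)$ be a solution of $$f^{(n)}(x)+a_{n-1}(x,f(x))f^{(n-1)}(x)+\cdots+a_0(x,f(x))f(x)=0,\qquad x\in(-a,a)\setminus\{0\},$$ satisfying $f(0)=f'(0)=\cdots=f^{(n-1)}(0)=0$. If $$|a_k(x,f(x))|=o\!\left(\frac{1}{|x|^{n-k}}\right)\quad\text{as }x\to 0,\qquad k=0,1,\dots,n-1,$$ then there exists $\delta>0$ such that $f\equiv 0$ on $[-\delta,\delta]$.
   Context: The coefficients may be singular at $x=0$; the equation is only required to hold for $x\neq 0$. *)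

theory Defs
  imports "HOL-Analysis.Analysis" "HOL-Library.Landau_Symbols"
begin

definition nderiv :: "nat \<Rightarrow> (real \<Rightarrow> 'a::real_normed_vector) \<Rightarrow> real \<Rightarrow> 'a" where
  "nderiv k f = ((\<lambda>g x. vector_derivative g (at x)) ^^ k) f"

definition smooth_on :: "real set \<Rightarrow> (real \<Rightarrow> 'a::real_normed_vector) \<Rightarrow> bool" where
  "smooth_on S f \<longleftrightarrow> (\<forall>k. \<forall>x\<in>S. nderiv k f differentiable (at x))"

end

theory Submission
  imports Defs
begin

(* Fix delta so small that [-delta,delta] lies in the domain and every
   coefficient satisfies |a_k(x,f(x))| <= eps / |x|^(n-k) there, with eps = 1/(2n).
   Let M be the maximum of |f^(n)| on [-delta,delta]. Since f^(k)(0) = 0 for k < n,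
   integrating n-k times (mean value inequality) gives |f^(k)(x)| <= M |x|^(n-k).
   Plugging these into the equation yields |f^(n)(x)| <= n * eps * M = M/2 for
   x <> 0, and by continuity also at x = 0; hence M <= M/2, so M = 0 and
   |f(x)| <= M |x|^n = 0 on [-delta,delta]. *)

lemma nderiv_0 [simp]: "nderiv 0 f = f"
  unfolding nderiv_def by simp

lemma nderiv_Suc: "nderiv (Suc k) f x = vector_derivative (nderiv k f) (at x)"
  unfolding nderiv_def by simp

lemma smooth_on_has_vector_derivative:
  assumes "smooth_on S f" "x \<in> S"
  shows "(nderiv k f has_vector_derivative nderiv (Suc k) f x) (at x)"
  using assms unfolding smooth_on_def nderiv_Suc by (blast intro: vector_derivative_works[THEN iffD1])

lemma mvt_bound:
  fixes g g' :: "real \<Rightarrow> 'a::real_normed_vector"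
  assumes "\<And>t. t \<in> closed_segment 0 x \<Longrightarrow> (g has_vector_derivative g' t) (at t)"
    and "\<And>t. t \<in> closed_segment 0 x \<Longrightarrow> norm (g' t) \<le> B"
  shows "norm (g x - g 0) \<le> B * \<bar>x\<bar>"
proof -
  have "norm (g x - g 0) \<le> B * norm (x - 0)"
  proof (rule differentiable_bound[of "closed_segment 0 x" g "\<lambda>t h. h *\<^sub>R g' t" B x 0])
    fix t assume t: "t \<in> closed_segment 0 x"
    show "(g has_derivative (\<lambda>h. h *\<^sub>R g' t)) (at t within closed_segment 0 x)"
      using assms(1)[OF t] unfolding has_vector_derivative_def
      by (rule has_derivative_at_withinI)
    have "onorm (\<lambda>h. h *\<^sub>R g' t) = norm (g' t)"
      using onorm_scaleR_left[OF bounded_linear_ident, of "g' t"] by (simp add: onorm_id)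
    then show "onorm (\<lambda>h. h *\<^sub>R g' t) \<le> B" using assms(2)[OF t] by simp
  qed auto
  then show ?thesis by simp
qed

lemma flat_derivative_bound:
  fixes f :: "real \<Rightarrow> 'a::real_normed_vector"
  assumes der: "\<And>k x. x \<in> {-\<delta>..\<delta>} \<Longrightarrow> (nderiv k f has_vector_derivative nderiv (Suc k) f x) (at x)"
    and init: "\<forall>k<n. nderiv k f 0 = 0"
    and top: "\<forall>x\<in>{-\<delta>..\<delta>}. norm (nderiv n f x) \<le> M"
    and "j \<le> n" "x \<in> {-\<delta>..\<delta>}"
  shows "norm (nderiv (n - j) f x) \<le> M * \<bar>x\<bar> ^ j"
  using \<open>j \<le> n\<close> \<open>x \<in> {-\<delta>..\<delta>}\<close>
proof (induction j arbitrary: x)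
  case 0
  then show ?case using top by simp
next
  case (Suc j)
  define k where "k = n - Suc j"
  have k: "Suc k = n - j" "k < n" using Suc.prems by (auto simp: k_def)
  have seg: "t \<in> {-\<delta>..\<delta>}" "\<bar>t\<bar> \<le> \<bar>x\<bar>" if "t \<in> closed_segment 0 x" for t
    using that Suc.prems by (auto simp: closed_segment_eq_real_ivl split: if_splits)
  have M: "M \<ge> 0" using top Suc.prems(2) norm_ge_zero order_trans by blast
  have "norm (nderiv k f x - nderiv k f 0) \<le> (M * \<bar>x\<bar> ^ j) * \<bar>x\<bar>"
  proof (rule mvt_bound)
    fix t assume t: "t \<in> closed_segment 0 x"
    show "(nderiv k f has_vector_derivative nderiv (n - j) f t) (at t)"
      using der[of t k] seg(1)[OF t] k by simp
    have "M * \<bar>t\<bar> ^ j \<le> M * \<bar>x\<bar> ^ j"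
      using M seg(2)[OF t] by (intro mult_left_mono power_mono) auto
    then show "norm (nderiv (n - j) f t) \<le> M * \<bar>x\<bar> ^ j"
      using Suc.IH[of t] Suc.prems seg(1)[OF t] by simp
  qed
  then show ?case using init k by (simp add: k_def mult_ac)
qed

lemma small_coefficients:
  fixes c :: "nat \<Rightarrow> real \<Rightarrow> real"
  assumes "\<forall>k<n. c k \<in> o[at 0](\<lambda>x. 1 / \<bar>x\<bar> ^ (n - k))" and "\<epsilon> > 0"
  obtains d where "d > 0"
    "\<And>x k. x \<noteq> 0 \<Longrightarrow> \<bar>x\<bar> < d \<Longrightarrow> k < n \<Longrightarrow> norm (c k x) \<le> \<epsilon> / \<bar>x\<bar> ^ (n - k)"
proof -
  have "\<forall>k\<in>{..<n}. eventually (\<lambda>x. norm (c k x) \<le> \<epsilon> * norm (1 / \<bar>x\<bar> ^ (n - k))) (at 0)"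
    using assms landau_o.smallD by blast
  then have "eventually (\<lambda>x. \<forall>k\<in>{..<n}. norm (c k x) \<le> \<epsilon> * norm (1 / \<bar>x\<bar> ^ (n - k))) (at 0)"
    by (intro eventually_ball_finite) auto
  then show ?thesis
    using that unfolding eventually_at by (auto simp: dist_real_def)
qed

lemma equation_bound:
  fixes y c :: "nat \<Rightarrow> 'a::real_normed_field"
  assumes eq: "y n + (\<Sum>k<n. c k * y k) = 0" and x: "x \<noteq> 0"
    and coeff: "\<And>k. k < n \<Longrightarrow> norm (c k) \<le> \<epsilon> / \<bar>x\<bar> ^ (n - k)"
    and lower: "\<And>k. k < n \<Longrightarrow> norm (y k) \<le> M * \<bar>x\<bar> ^ (n - k)"
    and "\<epsilon> \<ge> 0"
  shows "norm (y n) \<le> real n * \<epsilon> * M"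
proof -
  have "norm (y n) = norm (\<Sum>k<n. c k * y k)"
    using eq by (metis add_eq_0_iff norm_minus_cancel)
  also have "\<dots> \<le> (\<Sum>k<n. norm (c k) * norm (y k))"
    by (rule order_trans[OF norm_sum]) (simp add: norm_mult)
  also have "\<dots> \<le> (\<Sum>k<n. \<epsilon> * M)"
  proof (rule sum_mono)
    fix k assume "k \<in> {..<n}"
    then have k: "k < n" by simp
    have "norm (c k) * norm (y k) \<le> (\<epsilon> / \<bar>x\<bar> ^ (n - k)) * (M * \<bar>x\<bar> ^ (n - k))"
      using coeff[OF k] lower[OF k] \<open>\<epsilon> \<ge> 0\<close> by (intro mult_mono) auto
    also have "\<dots> = \<epsilon> * M" using x by simp
    finally show "norm (c k) * norm (y k) \<le> \<epsilon> * M" .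
  qed
  finally show ?thesis by simp
qed

(* A norm bound on a punctured neighbourhood of 0 extends to 0 by continuity;
   this is where the singular point x = 0 of the equation is handled. *)
lemma punctured_bound_at_0:
  fixes g :: "real \<Rightarrow> 'a::real_normed_vector"
  assumes "isCont g 0" "\<delta> > 0" "\<And>x. x \<in> {-\<delta>..\<delta>} \<Longrightarrow> x \<noteq> 0 \<Longrightarrow> norm (g x) \<le> B"
  shows "norm (g 0) \<le> B"
proof (rule Lim_norm_ubound[OF trivial_limit_at])
  show "(g \<longlongrightarrow> g 0) (at 0)"
    using assms(1) by (simp add: isCont_def)
  show "eventually (\<lambda>x. norm (g x) \<le> B) (at 0)"
    unfolding eventually_at using assms(2,3)
    by (intro exI[of _ \<delta>]) (auto simp: dist_real_def abs_less_iff)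
qed

lemma flat_solution_vanishes:
  fixes f :: "real \<Rightarrow> 'a::real_normed_field" and A :: "nat \<Rightarrow> real \<Rightarrow> 'a \<Rightarrow> 'a"
  assumes n: "n \<ge> 1" and a: "a > 0" and sm: "smooth_on {-a<..<a} f"
    and eq: "\<forall>x\<in>{-a<..<a} - {0}. nderiv n f x + (\<Sum>k<n. A k x (f x) * nderiv k f x) = 0"
    and init: "\<forall>k<n. nderiv k f 0 = 0"
    and lo: "\<forall>k<n. (\<lambda>x. norm (A k x (f x))) \<in> o[at 0](\<lambda>x. 1 / \<bar>x\<bar> ^ (n - k))"
  shows "\<exists>\<delta>>0. \<forall>x\<in>{-\<delta>..\<delta>}. f x = 0"
proof -
  define \<epsilon> where "\<epsilon> = 1 / (2 * real n)"
  have \<epsilon>: "\<epsilon> > 0" "real n * \<epsilon> = 1/2" using n by (auto simp: \<epsilon>_def)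
  obtain d where d: "d > 0"
    "\<And>x k. x \<noteq> 0 \<Longrightarrow> \<bar>x\<bar> < d \<Longrightarrow> k < n \<Longrightarrow> norm (A k x (f x)) \<le> \<epsilon> / \<bar>x\<bar> ^ (n - k)"
    using small_coefficients[OF lo \<epsilon>(1)] by (metis abs_norm_cancel real_norm_def)
  define \<delta> where "\<delta> = min (d/2) (a/2)"
  have \<delta>: "\<delta> > 0" "\<delta> < d" "{-\<delta>..\<delta>} \<subseteq> {-a<..<a}" using d a by (auto simp: \<delta>_def)
  have der: "\<And>k x. x \<in> {-\<delta>..\<delta>} \<Longrightarrow> (nderiv k f has_vector_derivative nderiv (Suc k) f x) (at x)"
    using smooth_on_has_vector_derivative[OF sm] \<delta>(3) by blast
  have cont: "\<And>x. x \<in> {-\<delta>..\<delta>} \<Longrightarrow> isCont (nderiv n f) x"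
    using der has_vector_derivative_continuous by blast
  obtain x0 where x0: "x0 \<in> {-\<delta>..\<delta>}" "\<forall>y\<in>{-\<delta>..\<delta>}. norm (nderiv n f y) \<le> norm (nderiv n f x0)"
    using continuous_attains_sup[OF compact_Icc _ continuous_on_norm[of _ "nderiv n f"]] \<delta>(1) cont
    by (metis atLeastAtMost_iff continuous_at_imp_continuous_on less_eq_real_def neg_le_0_iff_le empty_iff)
  define M where "M = norm (nderiv n f x0)"
  have lower: "norm (nderiv k f x) \<le> M * \<bar>x\<bar> ^ (n - k)" if "k \<le> n" "x \<in> {-\<delta>..\<delta>}" for k x
    using flat_derivative_bound[OF der init, where M = M and j = "n - k" and x = x] x0(2) that
    by (simp add: M_def)
  have half: "norm (nderiv n f x) \<le> M / 2" if x: "x \<in> {-\<delta>..\<delta>}" "x \<noteq> 0" for x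
  proof -
    have "norm (nderiv n f x) \<le> real n * \<epsilon> * M"
      by (rule equation_bound[where c = "\<lambda>k. A k x (f x)" and x = x])
         (use x \<delta> eq d(2) lower \<epsilon>(1) in auto)
    then show ?thesis using \<epsilon>(2) by simp
  qed
  have "norm (nderiv n f 0) \<le> M / 2"
    by (rule punctured_bound_at_0[OF cont[of 0] \<delta>(1) half]) (use \<delta>(1) in auto)
  then have "M \<le> M / 2" using half x0(1) by (cases "x0 = 0") (auto simp: M_def)
  then have "M = 0" by (simp add: M_def)
  then show ?thesis using lower[of 0] \<delta>(1) by (intro exI[of _ \<delta>]) auto
qed

theorem corollary2:
  shows "(\<forall>(n::nat) (a::real) (f::real \<Rightarrow> real) (A::nat \<Rightarrow> real \<Rightarrow> real \<Rightarrow> real).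
            n \<ge> 1 \<longrightarrow> a > 0 \<longrightarrow> smooth_on {-a<..<a} f \<longrightarrow>
            (\<forall>x\<in>{-a<..<a} - {0}. nderiv n f x + (\<Sum>k<n. A k x (f x) * nderiv k f x) = 0) \<longrightarrow>
            (\<forall>k<n. nderiv k f 0 = 0) \<longrightarrow>
            (\<forall>k<n. (\<lambda>x. norm (A k x (f x))) \<in> o[at 0](\<lambda>x. 1 / \<bar>x\<bar> ^ (n - k))) \<longrightarrow>
            (\<exists>\<delta>>0. \<forall>x\<in>{-\<delta>..\<delta>}. f x = 0))
       \<and> (\<forall>(n::nat) (a::real) (f::real \<Rightarrow> complex) (A::nat \<Rightarrow> real \<Rightarrow> complex \<Rightarrow> complex).
            n \<ge> 1 \<longrightarrow> a > 0 \<longrightarrow> smooth_on {-a<..<a} f \<longrightarrow>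
            (\<forall>x\<in>{-a<..<a} - {0}. nderiv n f x + (\<Sum>k<n. A k x (f x) * nderiv k f x) = 0) \<longrightarrow>
            (\<forall>k<n. nderiv k f 0 = 0) \<longrightarrow>
            (\<forall>k<n. (\<lambda>x. norm (A k x (f x))) \<in> o[at 0](\<lambda>x. 1 / \<bar>x\<bar> ^ (n - k))) \<longrightarrow>
            (\<exists>\<delta>>0. \<forall>x\<in>{-\<delta>..\<delta>}. f x = 0))"
  using flat_solution_vanishes[where 'a = real] flat_solution_vanishes[where 'a = complex]
  by blast

end
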